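(* Let $n\ge r\ge1$, let $\mathcal{O}\subset\mathbb{R}^{n\times r}$ be an open set containing ${\rm St}(n,r)$, and let $f:\mathcal{O}\to\mathbb{R}$ be continuously differentiable; let $L_f$ be a Lipschitz constant of $f$ on ${\rm St}(n,r)$. Consider problem (P): $\min_{X\in\mathcal{S}_{+}^{n,r}} f(X)$ with optimal value $f^*$. Suppose that, in the case $n>r>1$, every global minimizer of (P) has no zero rows. Then: 1. If $n=r$ or $n>r=1$, let $\kappa'>0$ be a constant such that ${\rm dist}(Z,\mathcal{S}_{+}^{n,r})\le\kappa'{\rm dist}(Z,\mathbb{R}_{+}^{n\times r})$ for all $Z\in{\rm St}(n,r)$ (such a constant exists). Then $f(X)-f^*+\kappa' L_f\vartheta(X)\ge0$ for all $X\in{\rm St}(n,r)$. 2. If $n>r>1$, then for every global minimizer $X^*$ of (P) there exists $\delta>0$ such that for all $\epsilon\ge0$ and all $X$ with $\|X-X^*\|_F\le\delta$ and $X\in\mathcal{F}_\epsilon:=\{X\in{\rm St}(n,r):\vartheta(X)=\epsilon\}$, one has $f(X)-f^*+\kappa L_f\vartheta(X)\ge0$, where $\kappa:=\frac{2.1\sqrt{r}[1+3r(n-r)]}{X^*_{i^*j^*}}$ with $X^*_{i^*j^*}$ the smallest nonzero entry of $X^*$. Consequently, there exists $\overline{\rho}>0$ such that for every $\rho\ge\overline{\rho}$ the penalty problem $\min_{X\in{\rm St}(n,r)}\{f(X)+\rho\vartheta(X)\}$ has the same set of global optimal solutions as (P).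
   Context: ${\rm St}(n,r):=\{X\in\mathbb{R}^{n\times r}: X^\top X=I_r\}$, $\mathbb{R}_{+}^{n\times r}$ is the cone of entrywise nonnegative matrices, $\mathcal{S}_{+}^{n,r}:=\mathbb{R}_{+}^{n\times r}\cap{\rm St}(n,r)$, ${\rm dist}$ is the Frobenius-norm distance. $\vartheta(X):=\langle E,\max(0,-X)\rangle=\sum_{i,j}\max(0,-X_{ij})$ is the elementwise $\ell_1$-norm distance from $X$ to $\mathbb{R}_{+}^{n\times r}$ ($E$ the all-ones matrix, $\max$ entrywise). *)

theory Defs
  imports "HOL-Analysis.Analysis"
begin

text \<open>Matrices in R^{n x r} are represented as real^'r^'n (rows indexed by 'n, columns by 'r);
  the norm on this type is the Frobenius norm.\<close>

definition Stiefel :: "(real^'r^'n) set" where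
  "Stiefel = {X. transpose X ** X = mat 1}"

definition nonneg_mats :: "(real^'r^'n) set" where
  "nonneg_mats = {X. \<forall>i j. 0 \<le> X $ i $ j}"

definition Splus :: "(real^'r^'n) set" where
  "Splus = nonneg_mats \<inter> Stiefel"

definition vartheta :: "real^'r^'n \<Rightarrow> real" where
  "vartheta X = (\<Sum>i\<in>UNIV. \<Sum>j\<in>UNIV. max 0 (- X $ i $ j))"

definition C1_on :: "(real^'r^'n) set \<Rightarrow> (real^'r^'n \<Rightarrow> real) \<Rightarrow> bool" where
  "C1_on U f \<longleftrightarrow> (\<exists>f' :: real^'r^'n \<Rightarrow> ((real^'r^'n) \<Rightarrow>\<^sub>L real).
      (\<forall>X\<in>U. (f has_derivative blinfun_apply (f' X)) (at X)) \<and> continuous_on U f')"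

definition global_min_P :: "(real^'r^'n \<Rightarrow> real) \<Rightarrow> real^'r^'n \<Rightarrow> bool" where
  "global_min_P f X \<longleftrightarrow> X \<in> Splus \<and> (\<forall>Y\<in>Splus. f X \<le> f Y)"

definition fstar :: "(real^'r^'n \<Rightarrow> real) \<Rightarrow> real" where
  "fstar f = Inf (f ` Splus)"

definition has_zero_row :: "real^'r^'n \<Rightarrow> bool" where
  "has_zero_row X \<longleftrightarrow> (\<exists>i. \<forall>j. X $ i $ j = 0)"

definition min_nonzero_entry :: "real^'r^'n \<Rightarrow> real" where
  "min_nonzero_entry X = Min {X $ i $ j | i j. X $ i $ j \<noteq> 0}"

definition global_min_penalty :: "(real^'r^'n \<Rightarrow> real) \<Rightarrow> real \<Rightarrow> real^'r^'n \<Rightarrow> bool" where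
  "global_min_penalty f \<rho> X \<longleftrightarrow> X \<in> Stiefel \<and>
     (\<forall>Y\<in>Stiefel. f X + \<rho> * vartheta X \<le> f Y + \<rho> * vartheta Y)"

end

theory Submission
  imports Defs
begin

text \<open>
  If Z is a point of S+ nearest to X in St(n,r), Lipschitz continuity gives
  f* \<le> f Z \<le> f X + L_f |X - Z|, so every error bound dist(X, S+) \<le> \<kappa> \<vartheta>(X) yields
  f X - f* + \<kappa> L_f \<vartheta>(X) \<ge> 0.

  Nonnegative orthonormal columns have disjoint supports, so near a minimizer X* without zero
  rows each row of X has one dominant entry, in the column where X* is nonzero. Keeping only
  these entries and normalizing the columns gives a point of S+ within twice the off-pattern
  l1-mass of X. The identity |X 1|^2 = r = |X|_F^2 bounds the positive part of that mass by its
  negative part, whence dist(X, S+) \<le> (5/m) \<vartheta>(X), m the smallest nonzero entry of X*.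
  For r = 1 the positive part of X plays the same role, and for n = r no point of S+ has a
  zero row. By compactness of St(n,r) these local bounds at all minimizers combine into a global
  one, f X - f* + \<rho>0 \<vartheta>(X) \<ge> 0, and every \<rho> > \<rho>0 then gives the penalty problem exactly
  the minimizers of (P).
\<close>

lemma norm_diff_normalized_le:
  fixes x y :: "'a::real_inner"
  assumes x: "norm x = 1" and y: "y \<noteq> 0" and perp: "y \<bullet> (x - y) = 0"
  shows "norm (y - y /\<^sub>R norm y) \<le> norm (x - y)"
proof -
  define t where "t = norm y"
  have t0: "0 < t" using y by (simp add: t_def)
  have "1 = (norm (y + (x - y)))\<^sup>2" using x by simp
  also have "\<dots> = t\<^sup>2 + (norm (x - y))\<^sup>2"
    using norm_add_Pythagorean[of y "x - y"] perp by (simp add: orthogonal_def t_def)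
  finally have pyth: "(norm (x - y))\<^sup>2 = 1 - t\<^sup>2" by simp
  then have "t\<^sup>2 \<le> 1" using zero_le_power2[of "norm (x - y)"] by linarith
  then have t1: "t \<le> 1" using abs_square_le_1[of t] t0 by simp
  have "1 / t - 1 \<ge> 0" using t0 t1 by (simp add: field_simps)
  have "norm (y - y /\<^sub>R t) = norm ((1 - 1 / t) *\<^sub>R y)"
    by (simp add: scaleR_diff_left divide_inverse_commute)
  also have "\<dots> = (1 / t - 1) * t"
    using \<open>1 / t - 1 \<ge> 0\<close> by (simp add: t_def)
  also have "\<dots> = 1 - t" using t0 by (simp add: field_simps)
  finally have "(norm (y - y /\<^sub>R t))\<^sup>2 = (1 - t)\<^sup>2" by simp
  also have "\<dots> \<le> (norm (x - y))\<^sup>2"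
    unfolding pyth using t0 t1 by (simp add: power2_eq_square algebra_simps)
  finally show ?thesis unfolding t_def by (rule power2_le_imp_le) simp
qed

lemma Stiefel_iff_orthonormal_columns:
  "X \<in> Stiefel \<longleftrightarrow> (\<forall>j k. column j X \<bullet> column k X = (if j = k then 1 else 0))"
  by (simp add: Stiefel_def matrix_matrix_mult_def transpose_def mat_def vec_eq_iff
      column_def inner_vec_def)

lemma column_diff: "column k (A - B) = column k A - column k B"
  by (simp add: column_def vec_eq_iff)

lemma power2_norm_columns: "(norm (X :: real^'r^'n))\<^sup>2 = (\<Sum>k\<in>UNIV. (norm (column k X))\<^sup>2)"
  unfolding power2_norm_eq_inner inner_vec_def column_def
  by (simp add: sum.swap[of _ "UNIV :: 'n set"])

lemma norm_Stiefel:
  assumes "X \<in> Stiefel"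
  shows "norm (X :: real^'r^'n) = sqrt (real CARD('r))"
proof -
  have "(norm X)\<^sup>2 = real CARD('r)"
    using assms by (simp add: power2_norm_columns power2_norm_eq_inner Stiefel_iff_orthonormal_columns)
  then show ?thesis by (simp add: real_sqrt_unique)
qed

lemma abs_entry_le_norm: "\<bar>(M :: real^'r^'n) $ i $ j\<bar> \<le> norm M"
  using component_le_norm_cart[of "M $ i" j] Finite_Cartesian_Product.norm_nth_le[of M i] by linarith

lemma norm_le_sum_abs_entries: "norm (M :: real^'r^'n) \<le> (\<Sum>i\<in>UNIV. \<Sum>j\<in>UNIV. \<bar>M $ i $ j\<bar>)"
proof -
  have "norm M \<le> (\<Sum>i\<in>UNIV. norm (M $ i))"
    by (simp add: norm_vec_def L2_set_le_sum)
  also have "\<dots> \<le> (\<Sum>i\<in>UNIV. \<Sum>j\<in>UNIV. \<bar>M $ i $ j\<bar>)"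
    by (intro sum_mono norm_le_l1_cart)
  finally show ?thesis .
qed

lemma Stiefel_column_norm: "X \<in> Stiefel \<Longrightarrow> norm (column k X) = 1"
  by (simp add: Stiefel_iff_orthonormal_columns norm_eq_1)

lemma Stiefel_column_nonzero: "X \<in> Stiefel \<Longrightarrow> column k X \<noteq> 0"
  by (metis Stiefel_column_norm norm_zero zero_neq_one)

lemma Stiefel_abs_entry_le_1:
  assumes "X \<in> Stiefel"
  shows "\<bar>X $ i $ j\<bar> \<le> 1"
  using component_le_norm_cart[of "column j X" i] Stiefel_column_norm[OF assms]
  by (simp add: column_def)

lemma compact_Stiefel: "compact (Stiefel :: (real^'r^'n) set)"
proof -
  have "bounded (Stiefel :: (real^'r^'n) set)"
    by (rule boundedI[of _ "sqrt (real CARD('r))"]) (simp add: norm_Stiefel)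
  have "Stiefel = (\<Inter>j. \<Inter>k. {X :: real^'r^'n.
          (\<Sum>l\<in>UNIV. X $ l $ j * X $ l $ k) = (if j = k then 1 else 0)})"
    by (auto simp: Stiefel_iff_orthonormal_columns column_def inner_vec_def)
  also have "closed \<dots>"
    by (intro closed_INT ballI closed_Collect_eq continuous_intros)
  finally have "closed (Stiefel :: (real^'r^'n) set)" .
  with \<open>bounded Stiefel\<close> show ?thesis by (simp add: compact_eq_bounded_closed)
qed

lemma closed_nonneg_mats: "closed (nonneg_mats :: (real^'r^'n) set)"
proof -
  have "nonneg_mats = (\<Inter>i. \<Inter>j. {X :: real^'r^'n. 0 \<le> X $ i $ j})"
    by (auto simp: nonneg_mats_def)
  also have "closed \<dots>"
    by (intro closed_INT ballI closed_Collect_le continuous_intros)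
  finally show ?thesis .
qed

lemma compact_Splus: "compact (Splus :: (real^'r^'n) set)"
  unfolding Splus_def by (simp add: closed_nonneg_mats compact_Stiefel compact_Int_closed Int_commute)

lemma Splus_nonempty:
  assumes "CARD('r) \<le> CARD('n)"
  shows "(Splus :: (real^'r^'n) set) \<noteq> {}"
proof -
  obtain e :: "'r \<Rightarrow> 'n" where e: "inj e"
    using assms card_le_inj[of "UNIV :: 'r set" "UNIV :: 'n set"] by auto
  define E :: "real^'r^'n" where "E = (\<chi> i j. if i = e j then 1 else 0)"
  have "column j E \<bullet> column k E = (if j = k then 1 else 0)" for j k
  proof -
    have "column j E \<bullet> column k E = (\<Sum>l\<in>UNIV. if l = e j then (if e j = e k then 1 else 0) else 0)"
      unfolding column_def inner_vec_def by (intro sum.cong) (auto simp: E_def)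
    also have "\<dots> = (if j = k then 1 else 0)" using e by (auto simp: inj_eq)
    finally show ?thesis .
  qed
  then have "E \<in> Stiefel" by (simp add: Stiefel_iff_orthonormal_columns)
  moreover have "E \<in> nonneg_mats" by (auto simp: nonneg_mats_def E_def)
  ultimately show ?thesis by (auto simp: Splus_def)
qed

lemma Splus_column_supports_disjoint:
  assumes "X \<in> Splus" and "X $ l $ j \<noteq> 0" and "X $ l $ k \<noteq> 0"
  shows "j = k"
proof (rule ccontr)
  assume "j \<noteq> k"
  then have "(\<Sum>i\<in>UNIV. X $ i $ j * X $ i $ k) = 0"
    using assms(1) by (simp add: Splus_def Stiefel_iff_orthonormal_columns column_def inner_vec_def)
  moreover have "\<forall>i. 0 \<le> X $ i $ j * X $ i $ k"
    using assms(1) by (simp add: Splus_def nonneg_mats_def)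
  ultimately have "X $ l $ j * X $ l $ k = 0" by (simp add: sum_nonneg_eq_0_iff)
  with assms(2,3) show False by simp
qed

lemma vartheta_nonneg: "0 \<le> vartheta X"
  unfolding vartheta_def by (intro sum_nonneg) auto

lemma vartheta_eq_0_iff: "vartheta X = 0 \<longleftrightarrow> X \<in> nonneg_mats"
proof -
  have "max 0 (- a) = 0 \<longleftrightarrow> 0 \<le> a" for a :: real by auto
  then show ?thesis by (simp add: vartheta_def nonneg_mats_def sum_nonneg_eq_0_iff sum_nonneg)
qed

lemma continuous_on_vartheta: "continuous_on A vartheta"
  unfolding vartheta_def by (intro continuous_intros)

lemma norm_diff_positive_part_le_vartheta:
  "norm (X - (\<chi> i j. max (X $ i $ j) 0)) \<le> vartheta X"
proof -
  have "norm (X - (\<chi> i j. max (X $ i $ j) 0)) \<le> (\<Sum>i\<in>UNIV. \<Sum>j\<in>UNIV. \<bar>X $ i $ j - max (X $ i $ j) 0\<bar>)"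
    using norm_le_sum_abs_entries[of "X - (\<chi> i j. max (X $ i $ j) 0)"] by simp
  also have "\<dots> = vartheta X"
    unfolding vartheta_def by (intro sum.cong refl) (auto simp: max_def)
  finally show ?thesis .
qed

lemma infdist_nonneg_mats_le_vartheta: "infdist X nonneg_mats \<le> vartheta X"
proof -
  have "infdist X nonneg_mats \<le> dist X (\<chi> i j. max (X $ i $ j) 0)"
    by (rule infdist_le) (simp add: nonneg_mats_def)
  then show ?thesis using norm_diff_positive_part_le_vartheta[of X] by (simp add: dist_norm)
qed

lemma infdist_Splus_le_orthogonal_columns:
  fixes X Y :: "real^'r^'n"
  assumes X: "X \<in> Stiefel" and Y_nonneg: "Y \<in> nonneg_mats"
    and Y_orth: "\<And>j k. j \<noteq> k \<Longrightarrow> column j Y \<bullet> column k Y = 0"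
    and Y_nz: "\<And>k. column k Y \<noteq> 0"
    and perp: "\<And>k. column k Y \<bullet> (column k X - column k Y) = 0"
  shows "infdist X Splus \<le> 2 * norm (X - Y)"
proof -
  define Z :: "real^'r^'n" where "Z = (\<chi> l k. Y $ l $ k / norm (column k Y))"
  have col_Z: "column k Z = column k Y /\<^sub>R norm (column k Y)" for k
    by (simp add: Z_def column_def vec_eq_iff divide_inverse_commute)
  have "column j Z \<bullet> column k Z = (if j = k then 1 else 0)" for j k
    using Y_orth[of j k] Y_nz[of k] by (simp add: col_Z power2_norm_eq_inner[symmetric] field_simps power2_eq_square)
  then have "Z \<in> Stiefel" by (simp add: Stiefel_iff_orthonormal_columns)
  moreover have "Z \<in> nonneg_mats"
    using Y_nonneg by (simp add: Z_def nonneg_mats_def)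
  ultimately have "Z \<in> Splus" by (simp add: Splus_def)
  have "(norm (Y - Z))\<^sup>2 \<le> (norm (X - Y))\<^sup>2"
    unfolding power2_norm_columns column_diff col_Z
    using norm_diff_normalized_le[OF Stiefel_column_norm[OF X] Y_nz perp]
    by (intro sum_mono power_mono) auto
  then have "norm (Y - Z) \<le> norm (X - Y)" by (rule power2_le_imp_le) simp
  have "infdist X Splus \<le> dist X Z" using \<open>Z \<in> Splus\<close> by (rule infdist_le)
  also have "\<dots> \<le> norm (X - Y) + norm (Y - Z)"
    using norm_triangle_ineq[of "X - Y" "Y - Z"] by (simp add: dist_norm)
  finally show ?thesis using \<open>norm (Y - Z) \<le> norm (X - Y)\<close> by simp
qed

lemma two_mult_minus_power2_ge:
  fixes a x d m :: real
  assumes x: "\<bar>x\<bar> \<le> d" and a: "m - d \<le> a" "a \<le> 1"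
  shows "(2 * m - 3 * d) * max x 0 - (2 + d) * max 0 (- x) \<le> 2 * a * x - x\<^sup>2"
proof (cases "0 \<le> x")
  case True
  have "x * x \<le> d * x" "(m - d) * x \<le> a * x"
    using mult_right_mono[of x d x] mult_right_mono[of "m - d" a x] x a True by auto
  then show ?thesis using True by (simp add: power2_eq_square algebra_simps max_def)
next
  case False
  have "x * x \<le> d * (- x)" "x \<le> a * x"
    using mult_right_mono[of "- x" d "- x"] mult_right_mono[of a 1 "- x"] x a False by auto
  moreover have "max x 0 = 0" "max 0 (- x) = - x" using False by auto
  ultimately show ?thesis by (simp add: power2_eq_square algebra_simps)
qed

lemma Stiefel_sum_power2_row_sums:
  assumes "X \<in> Stiefel"
  shows "(\<Sum>l\<in>UNIV. (\<Sum>k\<in>UNIV. X $ l $ k)\<^sup>2) = (\<Sum>l\<in>UNIV. \<Sum>k\<in>UNIV. (X $ l $ k)\<^sup>2)"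
proof -
  have orth: "(\<Sum>l\<in>UNIV. X $ l $ j * X $ l $ k) = (if j = k then 1 else 0)" for j k
    using assms by (simp add: Stiefel_iff_orthonormal_columns column_def inner_vec_def)
  have "(\<Sum>l\<in>UNIV. (\<Sum>k\<in>UNIV. X $ l $ k)\<^sup>2) = (\<Sum>l\<in>UNIV. \<Sum>j\<in>UNIV. \<Sum>k\<in>UNIV. X $ l $ j * X $ l $ k)"
    by (simp add: power2_eq_square sum_product)
  also have "\<dots> = (\<Sum>j\<in>UNIV. \<Sum>k\<in>UNIV. \<Sum>l\<in>UNIV. X $ l $ j * X $ l $ k)"
    by (subst sum.swap) (rule sum.cong[OF refl], rule sum.swap)
  also have "\<dots> = (\<Sum>k\<in>UNIV. \<Sum>l\<in>UNIV. X $ l $ k * X $ l $ k)"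
    by (simp add: orth)
  also have "\<dots> = (\<Sum>l\<in>UNIV. \<Sum>k\<in>UNIV. (X $ l $ k)\<^sup>2)"
    unfolding power2_eq_square by (rule sum.swap)
  finally show ?thesis .
qed

lemma Stiefel_off_pattern_mass:
  fixes X :: "real^'r^'n" and c :: "'n \<Rightarrow> 'r"
  assumes X: "X \<in> Stiefel"
    and on_pattern: "\<And>l. m - d \<le> X $ l $ c l"
    and off_pattern: "\<And>l k. k \<noteq> c l \<Longrightarrow> \<bar>X $ l $ k\<bar> \<le> d"
  shows "(2 * m - 3 * d) * (\<Sum>l\<in>UNIV. \<Sum>k\<in>UNIV - {c l}. max (X $ l $ k) 0)
           \<le> (2 + d) * (\<Sum>l\<in>UNIV. \<Sum>k\<in>UNIV - {c l}. max 0 (- X $ l $ k))"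
proof -
  define F where "F l k = (2 * m - 3 * d) * max (X $ l $ k) 0 - (2 + d) * max 0 (- X $ l $ k)" for l k
  have row: "(\<Sum>k\<in>UNIV - {c l}. F l k) \<le> (\<Sum>k\<in>UNIV. X $ l $ k)\<^sup>2 - (\<Sum>k\<in>UNIV. (X $ l $ k)\<^sup>2)" for l
  proof -
    define a where "a = X $ l $ c l"
    define B where "B = (\<Sum>k\<in>UNIV - {c l}. X $ l $ k)"
    define Q where "Q = (\<Sum>k\<in>UNIV - {c l}. (X $ l $ k)\<^sup>2)"
    have "(\<Sum>k\<in>UNIV - {c l}. F l k) \<le> (\<Sum>k\<in>UNIV - {c l}. 2 * a * X $ l $ k - (X $ l $ k)\<^sup>2)"
      unfolding F_def a_def
      using two_mult_minus_power2_ge off_pattern on_pattern Stiefel_abs_entry_le_1[OF X]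
      by (intro sum_mono) (simp add: abs_le_iff)
    also have "\<dots> = 2 * a * B - Q"
      by (simp add: B_def Q_def sum_subtractf sum_distrib_left)
    also have "\<dots> \<le> (a + B)\<^sup>2 - (a\<^sup>2 + Q)"
      by (simp add: power2_eq_square algebra_simps)
    also have "\<dots> = (\<Sum>k\<in>UNIV. X $ l $ k)\<^sup>2 - (\<Sum>k\<in>UNIV. (X $ l $ k)\<^sup>2)"
      by (simp add: a_def B_def Q_def sum.remove[of UNIV "c l"])
    finally show ?thesis .
  qed
  have "(\<Sum>l\<in>UNIV. \<Sum>k\<in>UNIV - {c l}. F l k)
          \<le> (\<Sum>l\<in>UNIV. (\<Sum>k\<in>UNIV. X $ l $ k)\<^sup>2 - (\<Sum>k\<in>UNIV. (X $ l $ k)\<^sup>2))"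
    by (intro sum_mono row)
  also have "\<dots> = 0"
    using Stiefel_sum_power2_row_sums[OF X] by (simp add: sum_subtractf)
  finally show ?thesis by (simp add: F_def sum_subtractf sum_distrib_left)
qed

lemma infdist_Splus_le_off_pattern:
  fixes X :: "real^'r^'n" and c :: "'n \<Rightarrow> 'r"
  assumes X: "X \<in> Stiefel" and c: "surj c" and pos: "\<And>l. 0 < X $ l $ c l"
  shows "infdist X Splus \<le> 2 * (\<Sum>l\<in>UNIV. \<Sum>k\<in>UNIV - {c l}. \<bar>X $ l $ k\<bar>)"
proof -
  define Y :: "real^'r^'n" where "Y = (\<chi> l k. if k = c l then X $ l $ k else 0)"
  have "infdist X Splus \<le> 2 * norm (X - Y)"
  proof (rule infdist_Splus_le_orthogonal_columns[OF X])
    show "Y \<in> nonneg_mats" using pos by (simp add: Y_def nonneg_mats_def less_imp_le)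
    show "column j Y \<bullet> column k Y = 0" if "j \<noteq> k" for j k
      using that unfolding Y_def column_def inner_vec_def by (intro sum.neutral) auto
    show "column k Y \<noteq> 0" for k
    proof -
      obtain l where "k = c l" using c by (metis surjD)
      then have "column k Y $ l \<noteq> 0" using pos[of l] by (simp add: Y_def column_def)
      then show ?thesis by auto
    qed
    show "column k Y \<bullet> (column k X - column k Y) = 0" for k
      unfolding Y_def column_def inner_vec_def by (intro sum.neutral) auto
  qed
  also have "norm (X - Y) \<le> (\<Sum>l\<in>UNIV. \<Sum>k\<in>UNIV. \<bar>(X - Y) $ l $ k\<bar>)"
    by (rule norm_le_sum_abs_entries)
  also have "\<dots> = (\<Sum>l\<in>UNIV. \<Sum>k\<in>UNIV - {c l}. \<bar>X $ l $ k\<bar>)"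
  proof (rule sum.cong[OF refl])
    fix l
    show "(\<Sum>k\<in>UNIV. \<bar>(X - Y) $ l $ k\<bar>) = (\<Sum>k\<in>UNIV - {c l}. \<bar>X $ l $ k\<bar>)"
      by (simp add: Y_def sum.remove[of UNIV "c l"])
  qed
  finally show ?thesis by simp
qed

lemma min_nonzero_entry_Splus:
  assumes "Xs \<in> Splus"
  shows "0 < min_nonzero_entry Xs" and "min_nonzero_entry Xs \<le> 1"
    and "Xs $ i $ j \<noteq> 0 \<Longrightarrow> min_nonzero_entry Xs \<le> Xs $ i $ j"
proof -
  let ?E = "{Xs $ i $ j | i j. Xs $ i $ j \<noteq> 0}"
  have St: "Xs \<in> Stiefel" and nonneg: "\<And>i j. 0 \<le> Xs $ i $ j"
    using assms by (auto simp: Splus_def nonneg_mats_def)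
  have fin: "finite ?E"
    by (rule finite_subset[of _ "range (\<lambda>(i, j). Xs $ i $ j)"]) auto
  have "Xs \<noteq> 0" using norm_Stiefel[OF St] by auto
  then have "?E \<noteq> {}" by (auto simp: vec_eq_iff)
  then have "min_nonzero_entry Xs \<in> ?E"
    unfolding min_nonzero_entry_def by (rule Min_in[OF fin])
  then obtain p q where pq: "min_nonzero_entry Xs = Xs $ p $ q" "Xs $ p $ q \<noteq> 0" by blast
  show "0 < min_nonzero_entry Xs" using pq nonneg[of p q] by simp
  show "min_nonzero_entry Xs \<le> 1" using pq Stiefel_abs_entry_le_1[OF St, of p q] by simp
  show "Xs $ i $ j \<noteq> 0 \<Longrightarrow> min_nonzero_entry Xs \<le> Xs $ i $ j"
    unfolding min_nonzero_entry_def using fin by (intro Min_le) auto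
qed

lemma infdist_Splus_le_vartheta_near_no_zero_row:
  fixes Xs :: "real^'r^'n"
  assumes Xs: "Xs \<in> Splus" and rows: "\<not> has_zero_row Xs"
  shows "\<exists>\<delta>>0. \<forall>X\<in>Stiefel. norm (X - Xs) \<le> \<delta> \<longrightarrow>
           infdist X Splus \<le> 5 / min_nonzero_entry Xs * vartheta X"
proof -
  define m where "m = min_nonzero_entry Xs"
  have m: "0 < m" "m \<le> 1" "\<And>i j. Xs $ i $ j \<noteq> 0 \<Longrightarrow> m \<le> Xs $ i $ j"
    unfolding m_def using min_nonzero_entry_Splus[OF Xs] by auto
  obtain c where c: "\<And>l. Xs $ l $ c l \<noteq> 0"
    using rows unfolding has_zero_row_def by metis
  have off_c: "Xs $ l $ k = 0" if "k \<noteq> c l" for l k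
    using Splus_column_supports_disjoint[OF Xs _ c] that by blast
  have "surj c" unfolding surj_def
  proof
    fix k
    have "column k Xs \<noteq> 0" using Xs by (simp add: Splus_def Stiefel_column_nonzero)
    then obtain l where "Xs $ l $ k \<noteq> 0" by (auto simp: vec_eq_iff column_def)
    then show "\<exists>l. k = c l" using off_c by metis
  qed
  define \<delta> where "\<delta> = m / 6"
  show ?thesis unfolding m_def[symmetric]
  proof (intro exI[of _ \<delta>] conjI ballI impI)
    show "0 < \<delta>" using m by (simp add: \<delta>_def)
    fix X assume X: "X \<in> Stiefel" and near: "norm (X - Xs) \<le> \<delta>"
    have near_entry: "\<bar>X $ l $ k - Xs $ l $ k\<bar> \<le> \<delta>" for l k
      using abs_entry_le_norm[of "X - Xs" l k] near by simp
    have on_c: "m - \<delta> \<le> X $ l $ c l" for l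
      using near_entry[of l "c l"] m(3)[OF c[of l]] by linarith
    have pos: "0 < X $ l $ c l" for l
      using on_c[of l] m by (simp add: \<delta>_def)
    have off: "\<bar>X $ l $ k\<bar> \<le> \<delta>" if "k \<noteq> c l" for l k
      using near_entry[of l k] off_c[OF that] by simp
    define P where "P = (\<Sum>l\<in>UNIV. \<Sum>k\<in>UNIV - {c l}. max (X $ l $ k) 0)"
    define N where "N = (\<Sum>l\<in>UNIV. \<Sum>k\<in>UNIV - {c l}. max 0 (- X $ l $ k))"
    have mass: "(2 * m - 3 * \<delta>) * P \<le> (2 + \<delta>) * N"
      unfolding P_def N_def using X on_c off by (rule Stiefel_off_pattern_mass)
    have "\<bar>x\<bar> = max x 0 + max 0 (- x)" for x :: real by auto
    then have "infdist X Splus \<le> 2 * (P + N)"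
      using infdist_Splus_le_off_pattern[OF X \<open>surj c\<close> pos] by (simp add: P_def N_def sum.distrib)
    have "N \<le> vartheta X"
      unfolding N_def vartheta_def by (intro sum_mono sum_mono2) auto
    have "0 \<le> P" "0 \<le> N"
      unfolding P_def N_def by (auto intro!: sum_nonneg)
    have "m * N \<le> N" using mult_right_mono[OF m(2) \<open>0 \<le> N\<close>] by simp
    moreover have "(3 / 2) * (m * P) \<le> 2 * N + (m * N) / 6"
      using mass by (simp add: \<delta>_def algebra_simps)
    ultimately have "m * (2 * (P + N)) \<le> 5 * N"
      using \<open>0 \<le> N\<close> by (simp add: algebra_simps)
    then have "2 * (P + N) \<le> 5 / m * N"
      using m(1) by (simp add: field_simps)
    also have "\<dots> \<le> 5 / m * vartheta X"
      using \<open>N \<le> vartheta X\<close> m(1) by (intro mult_left_mono) auto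
    finally show "infdist X Splus \<le> 5 / m * vartheta X"
      using \<open>infdist X Splus \<le> 2 * (P + N)\<close> by simp
  qed
qed

lemma infdist_Splus_le_vartheta_near_single_column:
  fixes Xs :: "real^'r^'n"
  assumes Xs: "Xs \<in> Splus" and r: "CARD('r) = 1"
  shows "\<exists>\<delta>>0. \<forall>X\<in>Stiefel. norm (X - Xs) \<le> \<delta> \<longrightarrow> infdist X Splus \<le> 2 * vartheta X"
proof -
  define m where "m = min_nonzero_entry Xs"
  have m: "0 < m" "\<And>i j. Xs $ i $ j \<noteq> 0 \<Longrightarrow> m \<le> Xs $ i $ j"
    unfolding m_def using min_nonzero_entry_Splus[OF Xs] by auto
  have single: "j = k" for j k :: 'r
    using r by (metis card_1_singletonE singletonD UNIV_I)
  show ?thesis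
  proof (intro exI[of _ "m / 2"] conjI ballI impI)
    show "0 < m / 2" using m by simp
    fix X assume X: "X \<in> Stiefel" and near: "norm (X - Xs) \<le> m / 2"
    define Y :: "real^'r^'n" where "Y = (\<chi> i j. max (X $ i $ j) 0)"
    have "infdist X Splus \<le> 2 * norm (X - Y)"
    proof (rule infdist_Splus_le_orthogonal_columns[OF X])
      show "Y \<in> nonneg_mats" by (simp add: Y_def nonneg_mats_def)
      show "column j Y \<bullet> column k Y = 0" if "j \<noteq> k" for j k
        using that single by blast
      show "column k Y \<noteq> 0" for k
      proof -
        have "column k Xs \<noteq> 0" using Xs by (simp add: Splus_def Stiefel_column_nonzero)
        then obtain l where "Xs $ l $ k \<noteq> 0" by (auto simp: vec_eq_iff column_def)
        then have "m \<le> Xs $ l $ k" by (rule m(2))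
        moreover have "\<bar>X $ l $ k - Xs $ l $ k\<bar> \<le> m / 2"
          using abs_entry_le_norm[of "X - Xs" l k] near by simp
        ultimately have "0 < X $ l $ k" using m(1) by linarith
        then have "column k Y $ l \<noteq> 0" by (simp add: Y_def column_def)
        then show ?thesis by auto
      qed
      show "column k Y \<bullet> (column k X - column k Y) = 0" for k
        unfolding Y_def column_def inner_vec_def by (intro sum.neutral) (auto simp: max_def)
    qed
    then show "infdist X Splus \<le> 2 * vartheta X"
      using norm_diff_positive_part_le_vartheta[of X] by (simp add: Y_def)
  qed
qed

lemma Splus_square_no_zero_row:
  fixes Y :: "real^'r^'n"
  assumes Y: "Y \<in> Splus" and square: "CARD('n) = CARD('r)"
  shows "\<not> has_zero_row Y"
proof -
  have "\<exists>l. Y $ l $ k \<noteq> 0" for k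
    using Y Stiefel_column_nonzero[of Y k] by (auto simp: Splus_def vec_eq_iff column_def)
  then obtain g where g: "\<And>k. Y $ g k $ k \<noteq> 0" by metis
  have "inj g"
    by (rule injI) (metis g Splus_column_supports_disjoint[OF Y])
  then have "range g = UNIV"
    using square by (intro card_eq_UNIV_imp_eq_UNIV) (simp_all add: card_image)
  then show ?thesis
    unfolding has_zero_row_def by (metis g UNIV_I imageE)
qed

lemma fstar_eq:
  assumes "global_min_P f Xs"
  shows "fstar f = f Xs"
  using assms unfolding global_min_P_def fstar_def by (intro cInf_eq_minimum) auto

lemma global_min_P_exists:
  fixes f :: "real^'r^'n \<Rightarrow> real"
  assumes "CARD('r) \<le> CARD('n)" and "continuous_on Splus f"
  shows "\<exists>X. global_min_P f X"
  using continuous_attains_inf[OF compact_Splus Splus_nonempty[OF assms(1)] assms(2)]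
  unfolding global_min_P_def by blast

lemma penalty_bound_of_error_bound:
  fixes f :: "real^'r^'n \<Rightarrow> real"
  assumes Lf: "lipschitz_on Lf Stiefel f" and nr: "CARD('r) \<le> CARD('n)"
    and X: "X \<in> Stiefel" and eb: "infdist X Splus \<le> \<kappa> * vartheta X"
  shows "f X - fstar f + \<kappa> * Lf * vartheta X \<ge> 0"
proof -
  obtain Z where Z: "Z \<in> Splus" "infdist X Splus = dist X Z"
    using infdist_attains_inf[OF compact_imp_closed[OF compact_Splus] Splus_nonempty[OF nr]] by blast
  have "continuous_on Splus f"
    using lipschitz_on_continuous_on[OF Lf] by (rule continuous_on_subset) (simp add: Splus_def)
  then obtain Xs where Xs: "global_min_P f Xs" using global_min_P_exists[OF nr] by blast
  have "fstar f \<le> f Z" using Xs Z(1) by (simp add: fstar_eq global_min_P_def)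
  also have "\<dots> \<le> f X + dist (f Z) (f X)" by (simp add: dist_real_def)
  also have "\<dots> \<le> f X + Lf * dist Z X"
    using Lf X Z(1) by (simp add: lipschitz_on_def Splus_def)
  also have "\<dots> \<le> f X + Lf * (\<kappa> * vartheta X)"
    using Z(2) eb Lf by (simp add: dist_commute lipschitz_on_def mult_left_mono)
  finally show ?thesis by (simp add: algebra_simps)
qed

lemma limit_of_penalty_violators:
  fixes f g :: "'a::metric_space \<Rightarrow> real"
  assumes f: "continuous_on S f" and g: "continuous_on S g"
    and g_nonneg: "\<And>x. x \<in> S \<Longrightarrow> 0 \<le> g x" and fl: "\<And>x. x \<in> S \<Longrightarrow> fl \<le> f x"
    and x: "\<And>k. x k \<in> S" "\<And>k. f (x k) + real (Suc k) * g (x k) < fmin"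
    and L: "L \<in> S" "strict_mono \<sigma>" "(x \<circ> \<sigma>) \<longlonglongrightarrow> L"
  shows "g L = 0" and "f L \<le> fmin"
proof -
  have "g (x (\<sigma> k)) \<le> (fmin - fl) / real (Suc k)" for k
  proof -
    have "real (Suc k) * g (x (\<sigma> k)) \<le> real (Suc (\<sigma> k)) * g (x (\<sigma> k))"
      using seq_suble[OF L(2), of k] g_nonneg[OF x(1)] by (intro mult_right_mono) auto
    also have "\<dots> \<le> fmin - fl" using x(2)[of "\<sigma> k"] fl[OF x(1)[of "\<sigma> k"]] by linarith
    finally show ?thesis by (simp add: field_simps)
  qed
  moreover have "(\<lambda>k. (fmin - fl) / real (Suc k)) \<longlonglongrightarrow> 0"
    using LIMSEQ_Suc[OF lim_const_over_n] by simp
  moreover have "(\<lambda>k. g (x (\<sigma> k))) \<longlonglongrightarrow> g L"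
    using continuous_on_tendsto_compose[OF g L(3) L(1)] x(1) by (simp add: o_def)
  ultimately have "g L \<le> 0" by (intro LIMSEQ_le) auto
  then show "g L = 0" using g_nonneg[OF L(1)] by simp
  have "f (x k) < fmin" for k
    using x(2)[of k] mult_nonneg_nonneg[OF _ g_nonneg[OF x(1)], of "real (Suc k)" k] by linarith
  moreover have "(\<lambda>k. f (x (\<sigma> k))) \<longlonglongrightarrow> f L"
    using continuous_on_tendsto_compose[OF f L(3) L(1)] x(1) by (simp add: o_def)
  ultimately show "f L \<le> fmin" by (intro LIMSEQ_le_const2) (auto intro: less_imp_le)
qed

lemma exact_penalty_of_local_bounds:
  fixes f g :: "'a::metric_space \<Rightarrow> real"
  assumes S: "compact S" and f: "continuous_on S f" and g: "continuous_on S g"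
    and g_nonneg: "\<And>x. x \<in> S \<Longrightarrow> 0 \<le> g x"
    and feasible: "\<And>x. x \<in> S \<Longrightarrow> g x = 0 \<Longrightarrow> fmin \<le> f x"
    and local: "\<And>y. y \<in> S \<Longrightarrow> g y = 0 \<Longrightarrow> f y = fmin \<Longrightarrow>
                  \<exists>\<delta>>0. \<exists>C. \<forall>x\<in>S. dist x y \<le> \<delta> \<longrightarrow> fmin \<le> f x + C * g x"
  shows "\<exists>\<rho>>0. \<forall>x\<in>S. fmin \<le> f x + \<rho> * g x"
proof (rule ccontr)
  assume "\<not> ?thesis"
  then have "\<forall>k. \<exists>x\<in>S. f x + real (Suc k) * g x < fmin"
    by (metis not_le of_nat_0_less_iff zero_less_Suc)
  then obtain x where x: "\<And>k. x k \<in> S" "\<And>k. f (x k) + real (Suc k) * g (x k) < fmin"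
    by metis
  obtain fl where fl: "\<And>y. y \<in> S \<Longrightarrow> fl \<le> f y"
    using continuous_attains_inf[OF S _ f] x(1) by blast
  obtain L \<sigma> where L: "L \<in> S" "strict_mono \<sigma>" "(x \<circ> \<sigma>) \<longlonglongrightarrow> L"
    using compact_imp_seq_compact[OF S] x(1) by (metis seq_compactE)
  obtain \<delta> C where "\<delta> > 0" and C: "\<forall>y\<in>S. dist y L \<le> \<delta> \<longrightarrow> fmin \<le> f y + C * g y"
    using limit_of_penalty_violators[OF f g g_nonneg fl x L] local[OF L(1)] feasible[OF L(1)]
    by force
  obtain N where N: "\<And>k. k \<ge> N \<Longrightarrow> dist (x (\<sigma> k)) L < \<delta>"
    using L(3) \<open>\<delta> > 0\<close> unfolding lim_sequentially by (auto simp: o_def)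
  define k where "k = max N (nat \<lceil>C\<rceil>)"
  have "fmin \<le> f (x (\<sigma> k)) + C * g (x (\<sigma> k))"
    using C x(1) N[of k] by (simp add: k_def less_imp_le)
  also have "\<dots> \<le> f (x (\<sigma> k)) + real (Suc (\<sigma> k)) * g (x (\<sigma> k))"
  proof -
    have "C \<le> real k" unfolding k_def by linarith
    then show ?thesis
      using seq_suble[OF L(2), of k] g_nonneg[OF x(1)] by (intro add_left_mono mult_right_mono) auto
  qed
  also have "\<dots> < fmin" by (rule x(2))
  finally show False by simp
qed

lemma global_min_penalty_iff_global_min_P:
  fixes f :: "real^'r^'n \<Rightarrow> real"
  assumes Xs: "global_min_P f Xs"
    and bound: "\<forall>Y\<in>Stiefel. fstar f \<le> f Y + \<rho>0 * vartheta Y" and \<rho>: "\<rho>0 < \<rho>"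
  shows "global_min_penalty f \<rho> X \<longleftrightarrow> global_min_P f X"
proof
  assume X: "global_min_penalty f \<rho> X"
  have "Xs \<in> Stiefel" "vartheta Xs = 0"
    using Xs by (simp_all add: global_min_P_def Splus_def vartheta_eq_0_iff)
  then have "f X + \<rho> * vartheta X \<le> fstar f"
    using X fstar_eq[OF Xs] by (force simp: global_min_penalty_def)
  moreover have "fstar f \<le> f X + \<rho>0 * vartheta X"
    using X bound by (simp add: global_min_penalty_def)
  ultimately have "(\<rho> - \<rho>0) * vartheta X \<le> 0" by (simp add: algebra_simps)
  then have "vartheta X = 0"
    using \<rho> vartheta_nonneg[of X] by (simp add: mult_le_0_iff)
  with \<open>f X + \<rho> * vartheta X \<le> fstar f\<close> have "f X \<le> f Xs" by (simp add: fstar_eq[OF Xs])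
  then have "\<forall>Y\<in>Splus. f X \<le> f Y"
    using Xs by (auto simp: global_min_P_def intro: order_trans)
  with \<open>vartheta X = 0\<close> show "global_min_P f X"
    using X by (simp add: global_min_P_def global_min_penalty_def Splus_def vartheta_eq_0_iff)
next
  assume X: "global_min_P f X"
  have "f X + \<rho> * vartheta X \<le> f Y + \<rho> * vartheta Y" if "Y \<in> Stiefel" for Y
  proof -
    have "f X + \<rho> * vartheta X = fstar f"
      using X by (simp add: fstar_eq global_min_P_def Splus_def vartheta_eq_0_iff)
    also have "\<dots> \<le> f Y + \<rho>0 * vartheta Y" using bound that by blast
    also have "\<dots> \<le> f Y + \<rho> * vartheta Y"
      using \<rho> vartheta_nonneg[of Y] by (simp add: mult_right_mono)
    finally show ?thesis .
  qed
  then show "global_min_penalty f \<rho> X"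
    using X by (simp add: global_min_penalty_def global_min_P_def Splus_def)
qed

lemma exact_penalty_Stiefel:
  fixes f :: "real^'r^'n \<Rightarrow> real"
  assumes Lf: "lipschitz_on Lf Stiefel f" and nr: "CARD('r) \<le> CARD('n)"
    and local_eb: "\<And>Xs. global_min_P f Xs \<Longrightarrow>
      \<exists>\<delta>>0. \<exists>\<kappa>. \<forall>X\<in>Stiefel. norm (X - Xs) \<le> \<delta> \<longrightarrow> infdist X Splus \<le> \<kappa> * vartheta X"
  shows "\<exists>\<rho>bar>0. \<forall>\<rho>\<ge>\<rho>bar. {X. global_min_penalty f \<rho> X} = {X. global_min_P f X}"
proof -
  have f: "continuous_on Stiefel f" using Lf by (rule lipschitz_on_continuous_on)
  then obtain Xs where Xs: "global_min_P f Xs"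
    using global_min_P_exists[OF nr] continuous_on_subset by (metis Int_lower2 Splus_def)
  have "\<exists>\<rho>0>0. \<forall>X\<in>Stiefel. fstar f \<le> f X + \<rho>0 * vartheta X"
  proof (rule exact_penalty_of_local_bounds[OF compact_Stiefel f continuous_on_vartheta vartheta_nonneg])
    show "fstar f \<le> f X" if "X \<in> Stiefel" "vartheta X = 0" for X
      using that Xs by (simp add: fstar_eq global_min_P_def Splus_def vartheta_eq_0_iff)
    fix Y assume "Y \<in> Stiefel" "vartheta Y = 0" "f Y = fstar f"
    then have "global_min_P f Y"
      using Xs by (simp add: fstar_eq global_min_P_def Splus_def vartheta_eq_0_iff)
    then obtain \<delta> \<kappa> where "\<delta> > 0"
      and eb: "\<forall>X\<in>Stiefel. norm (X - Y) \<le> \<delta> \<longrightarrow> infdist X Splus \<le> \<kappa> * vartheta X"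
      using local_eb by blast
    have "\<forall>X\<in>Stiefel. dist X Y \<le> \<delta> \<longrightarrow> fstar f \<le> f X + \<kappa> * Lf * vartheta X"
      using penalty_bound_of_error_bound[OF Lf nr] eb by (fastforce simp: dist_norm)
    with \<open>\<delta> > 0\<close> show "\<exists>\<delta>>0. \<exists>C. \<forall>X\<in>Stiefel. dist X Y \<le> \<delta> \<longrightarrow> fstar f \<le> f X + C * vartheta X"
      by blast
  qed
  then obtain \<rho>0 where "\<rho>0 > 0" "\<forall>X\<in>Stiefel. fstar f \<le> f X + \<rho>0 * vartheta X" by blast
  then show ?thesis
    using global_min_penalty_iff_global_min_P[OF Xs]
    by (intro exI[of _ "2 * \<rho>0"]) auto
qed

lemma five_le_error_bound_constant:
  fixes n r :: nat
  assumes "1 < r" and "r < n"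
  shows "5 \<le> 21 / 10 * sqrt (real r) * (1 + 3 * real r * (real n - real r))"
proof -
  have "1 \<le> sqrt (real r)" using assms by simp
  moreover have "2 * 1 \<le> real r * (real n - real r)"
    using assms by (intro mult_mono) auto
  ultimately have "1 * 7 \<le> sqrt (real r) * (1 + 3 * real r * (real n - real r))"
    by (intro mult_mono) auto
  then show ?thesis by simp
qed

lemma penalty_bound_of_global_error_bound:
  fixes f :: "real^'r^'n \<Rightarrow> real"
  assumes Lf: "lipschitz_on Lf Stiefel f" and nr: "CARD('r) \<le> CARD('n)" and "0 < \<kappa>"
    and eb: "\<forall>Z\<in>(Stiefel :: (real^'r^'n) set). infdist Z Splus \<le> \<kappa> * infdist Z nonneg_mats"
    and X: "X \<in> Stiefel"
  shows "f X - fstar f + \<kappa> * Lf * vartheta X \<ge> 0"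
proof (rule penalty_bound_of_error_bound[OF Lf nr X])
  have "infdist X Splus \<le> \<kappa> * infdist X nonneg_mats" using eb X by blast
  also have "\<dots> \<le> \<kappa> * vartheta X"
    using \<open>0 < \<kappa>\<close> infdist_nonneg_mats_le_vartheta[of X] by simp
  finally show "infdist X Splus \<le> \<kappa> * vartheta X" .
qed

lemma penalty_bound_near_no_zero_row_minimizer:
  fixes f :: "real^'r^'n \<Rightarrow> real"
  assumes Lf: "lipschitz_on Lf Stiefel f" and nr: "CARD('r) \<le> CARD('n)"
    and Xs: "global_min_P f Xs" and rows: "\<not> has_zero_row Xs" and c: "5 \<le> c"
  shows "\<exists>\<delta>>0. \<forall>X\<in>Stiefel. norm (X - Xs) \<le> \<delta> \<longrightarrow>
           f X - fstar f + (c / min_nonzero_entry Xs) * Lf * vartheta X \<ge> 0"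
proof -
  have "Xs \<in> Splus" using Xs by (simp add: global_min_P_def)
  then obtain \<delta> where "\<delta> > 0" and eb: "\<forall>X\<in>Stiefel. norm (X - Xs) \<le> \<delta> \<longrightarrow>
      infdist X Splus \<le> 5 / min_nonzero_entry Xs * vartheta X"
    using infdist_Splus_le_vartheta_near_no_zero_row rows by blast
  have "5 / min_nonzero_entry Xs \<le> c / min_nonzero_entry Xs"
    using c min_nonzero_entry_Splus(1)[OF \<open>Xs \<in> Splus\<close>] by (intro divide_right_mono) auto
  then have "\<forall>X\<in>Stiefel. norm (X - Xs) \<le> \<delta> \<longrightarrow> infdist X Splus \<le> c / min_nonzero_entry Xs * vartheta X"
    using eb vartheta_nonneg by (meson mult_right_mono order_trans)
  with \<open>\<delta> > 0\<close> show ?thesis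
    using penalty_bound_of_error_bound[OF Lf nr] by blast
qed

lemma local_error_bound_at_global_min:
  fixes f :: "real^'r^'n \<Rightarrow> real"
  assumes nr: "CARD('r) \<le> CARD('n)"
    and nozero: "CARD('n) > CARD('r) \<and> CARD('r) > 1 \<Longrightarrow>
                   (\<forall>X. global_min_P f X \<longrightarrow> \<not> has_zero_row X)"
    and Xs: "global_min_P f Xs"
  shows "\<exists>\<delta>>0. \<exists>\<kappa>. \<forall>X\<in>Stiefel. norm (X - Xs) \<le> \<delta> \<longrightarrow> infdist X Splus \<le> \<kappa> * vartheta X"
proof -
  have "Xs \<in> Splus" using Xs by (simp add: global_min_P_def)
  have "CARD('r) = 1 \<or> \<not> has_zero_row Xs"
  proof (cases "CARD('n) = CARD('r)")
    case True
    then show ?thesis using Splus_square_no_zero_row[OF \<open>Xs \<in> Splus\<close>] by blast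
  next
    case False
    then have "CARD('r) < CARD('n)" using nr by simp
    moreover have "CARD('r) = 1 \<or> 1 < CARD('r)"
      using zero_less_card_finite[where 'a = 'r] by linarith
    ultimately show ?thesis using nozero Xs by blast
  qed
  then show ?thesis
    using infdist_Splus_le_vartheta_near_single_column[OF \<open>Xs \<in> Splus\<close>]
      infdist_Splus_le_vartheta_near_no_zero_row[OF \<open>Xs \<in> Splus\<close>] by blast
qed

theorem theorem3p6:
  fixes f :: "real^'r^'n \<Rightarrow> real" and U :: "(real^'r^'n) set" and Lf :: real
  assumes nr: "CARD('n) \<ge> CARD('r)"
    and openO: "open U" and StO: "Stiefel \<subseteq> U"
    and C1: "C1_on U f"
    and Lf: "lipschitz_on Lf Stiefel f"
    and nozero: "CARD('n) > CARD('r) \<and> CARD('r) > 1 \<Longrightarrow>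
                   (\<forall>X. global_min_P f X \<longrightarrow> \<not> has_zero_row X)"
  shows
    "((CARD('n) = CARD('r) \<or> (CARD('n) > CARD('r) \<and> CARD('r) = 1)) \<longrightarrow>
        (\<forall>\<kappa>'>0. (\<forall>Z\<in>(Stiefel :: (real^'r^'n) set).
                     infdist Z Splus \<le> \<kappa>' * infdist Z nonneg_mats) \<longrightarrow>
           (\<forall>X\<in>(Stiefel :: (real^'r^'n) set). f X - fstar f + \<kappa>' * Lf * vartheta X \<ge> 0)))
     \<and>
     ((CARD('n) > CARD('r) \<and> CARD('r) > 1) \<longrightarrow>
        (\<forall>Xs. global_min_P f Xs \<longrightarrow>
           (\<exists>\<delta>>0. \<forall>\<epsilon>\<ge>0. \<forall>X. norm (X - Xs) \<le> \<delta> \<and> X \<in> Stiefel \<and> vartheta X = \<epsilon> \<longrightarrow>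
              f X - fstar f
                + ((21/10) * sqrt (real CARD('r)) * (1 + 3 * real CARD('r) * (real CARD('n) - real CARD('r)))
                    / min_nonzero_entry Xs) * Lf * vartheta X \<ge> 0)))
     \<and>
     (\<exists>\<rho>bar>0. \<forall>\<rho>\<ge>\<rho>bar. {X. global_min_penalty f \<rho> X} = {X. global_min_P f X})"
proof -
  show ?thesis (is "(_ \<longrightarrow> ?part1) \<and> (?shape \<longrightarrow> (\<forall>Xs. global_min_P f Xs \<longrightarrow> ?near Xs)) \<and> ?part3")
  proof (intro conjI impI)
    show ?part1 using penalty_bound_of_global_error_bound[OF Lf nr] by blast
  next
    assume shape: ?shape
    show "\<forall>Xs. global_min_P f Xs \<longrightarrow> ?near Xs"
    proof (intro allI impI)
      fix Xs assume Xs: "global_min_P f Xs"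
      \<comment> \<open>The local error bound holds with 5 / m, which is at most the constant of the statement.\<close>
      show "?near Xs"
        using penalty_bound_near_no_zero_row_minimizer[OF Lf nr Xs] nozero[OF shape] Xs
          five_le_error_bound_constant[of "CARD('r)" "CARD('n)"] shape by blast
    qed
  next
    show ?part3
      using exact_penalty_Stiefel[OF Lf nr local_error_bound_at_global_min[OF nr nozero]] .
  qed
qed

end
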